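(* Let $0<\varepsilon\le 0.1$, let $\Box$ be a closed axis-parallel square of side length $\varepsilon$ with center $o$, and let $R\subseteq\Box$ be a nonempty circular domain. For every non-vertex point $p\in\partial(R\oplus D)$, $\big|\mathsf{ang}(\overrightarrow{op},\mathsf{tan}_p)-\tfrac{\pi}{2}\big|\le 4\varepsilon$.
   Context: A circular arc is a connected portion of a circle in $\mathbb{R}^2$ (segments included). A circular domain is a closed subset of $\mathbb{R}^2$ whose boundary consists of finitely many circular arcs intersecting only at their endpoints (finite point sets are also allowed). $D$ is the closed unit disk centered at the origin and $\oplus$ denotes Minkowski sum. $\partial(R\oplus D)$ is a simple closed curve consisting of circular arcs, and each ray from $o$ meets it exactly once. A non-vertex point of $\partial(R\oplus D)$ is a point in the relative interior of one of its boundary arcs; at such a point $p$ the tangent line is unique, and the clockwise tangent $\mathsf{tan}_p$ is the unit vector along this tangent line such that moving $p$ along $\partial(R\oplus D)$ in direction $\mathsf{tan}_p$ rotates $\overrightarrow{op}$ clockwise. For nonzero vectors $\vec u,\vec v$, $\mathsf{ang}(\vec u,\vec v)\in[0,2\pi)$ is the clockwise ordered angle from $\vec u$ to $\vec v$ (the angle swept when rotating $\vec u$ clockwise until it points in the direction of $\vec v$). *)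

theory Defs
  imports "HOL-Analysis.Analysis"
begin

text \<open>The plane R^2 is modelled by the complex numbers.\<close>

definition round_arc :: "complex \<Rightarrow> real \<Rightarrow> real \<Rightarrow> real \<Rightarrow> complex set" where
  "round_arc c r th phi = (\<lambda>s. c + complex_of_real r * cis (th + s)) ` {0..phi}"

text \<open>A circular arc A with endpoints p and q (line segments included; a full circle
  has coinciding endpoints).\<close>
definition circ_arc :: "complex set \<Rightarrow> complex \<Rightarrow> complex \<Rightarrow> bool" where
  "circ_arc A p q \<longleftrightarrow>
     (\<exists>a b. a \<noteq> b \<and> A = closed_segment a b \<and> {p, q} = {a, b}) \<or>
     (\<exists>c r th phi. 0 < r \<and> 0 < phi \<and> phi \<le> 2 * pi \<and> A = round_arc c r th phi \<and>
        p = c + complex_of_real r * cis th \<and> q = c + complex_of_real r * cis (th + phi))"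

definition circular_domain :: "complex set \<Rightarrow> bool" where
  "circular_domain R \<longleftrightarrow> closed R \<and>
     (\<exists>Arcs :: (complex set \<times> complex \<times> complex) set. \<exists>P :: complex set.
        finite Arcs \<and> finite P \<and>
        (\<forall>(A, p, q) \<in> Arcs. circ_arc A p q) \<and>
        (\<forall>(A, p, q) \<in> Arcs. \<forall>(B, p', q') \<in> Arcs. A \<noteq> B \<longrightarrow> A \<inter> B \<subseteq> {p, q} \<inter> {p', q'}) \<and>
        frontier R = (\<Union>(A, p, q) \<in> Arcs. A) \<union> P)"

definition minkowski_sum :: "complex set \<Rightarrow> complex set \<Rightarrow> complex set" where
  "minkowski_sum A B = {a + b | a b. a \<in> A \<and> b \<in> B}"

definition axis_square :: "complex \<Rightarrow> real \<Rightarrow> complex set" where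
  "axis_square z e = {x. \<bar>Re x - Re z\<bar> \<le> e / 2 \<and> \<bar>Im x - Im z\<bar> \<le> e / 2}"

definition arc_tangent_at :: "complex set \<Rightarrow> complex \<Rightarrow> complex \<Rightarrow> bool" where
  "arc_tangent_at S p t \<longleftrightarrow> (\<exists>e>0.
     (\<exists>a b. a \<noteq> b \<and> p \<in> open_segment a b \<and>
        S \<inter> ball p e = closed_segment a b \<inter> ball p e \<and>
        (\<exists>k::real. t = complex_of_real k * (b - a))) \<or>
     (\<exists>c r th phi s. 0 < r \<and> 0 < phi \<and> phi \<le> 2 * pi \<and> 0 < s \<and> s < phi \<and>
        p = c + complex_of_real r * cis (th + s) \<and>
        S \<inter> ball p e = round_arc c r th phi \<inter> ball p e \<and>
        (\<exists>k::real. t = complex_of_real k * \<i> * (p - c))))"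

definition non_vertex :: "complex set \<Rightarrow> complex \<Rightarrow> bool" where
  "non_vertex S p \<longleftrightarrow> p \<in> S \<and> (\<exists>t. t \<noteq> 0 \<and> arc_tangent_at S p t)"

text \<open>Clockwise tangent at p w.r.t. centre z: unit tangent vector such that moving p in
  direction t rotates the vector from z to p clockwise.\<close>
definition clockwise_tangent :: "complex set \<Rightarrow> complex \<Rightarrow> complex \<Rightarrow> complex \<Rightarrow> bool" where
  "clockwise_tangent S z p t \<longleftrightarrow> norm t = 1 \<and> arc_tangent_at S p t \<and> Im (cnj (p - z) * t) < 0"

definition ang :: "complex \<Rightarrow> complex \<Rightarrow> real" where
  "ang u v = (THE a. 0 \<le> a \<and> a < 2 * pi \<and> sgn v = cis (- a) * sgn u)"

end

theory Submission
  imports Defs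
begin

text \<open>Write \<open>p = r + w\<close> with \<open>r \<in> R\<close> and \<open>|w| = 1\<close>. Since the open unit disk around
  \<open>r\<close> lies in the interior of \<open>R \<oplus> D\<close>, \<open>p\<close> is a point of the boundary curve closest to \<open>r\<close>,
  so the boundary arc through \<open>p\<close> is perpendicular to \<open>w\<close> there and the clockwise tangent
  is \<open>-i w\<close>. As \<open>|r - o| \<le> \<epsilon>\<close>, the direction of \<open>p - o = (1 + (r - o)/w) w\<close> differs
  from that of \<open>w\<close> by an angle of at most \<open>arctan (\<epsilon> / (1 - \<epsilon>)) \<le> 4 \<epsilon>\<close>.\<close>

lemma has_real_derivative_norm_diff_squared:
  fixes g :: "real \<Rightarrow> complex"
  assumes "(g has_vector_derivative g') (at s)"
  shows "((\<lambda>u. (norm (g u - r))\<^sup>2) has_real_derivative 2 * Re (cnj (g s - r) * g')) (at s)"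
proof -
  have d: "((\<lambda>u. g u - r) has_derivative (\<lambda>h. h *\<^sub>R g')) (at s)"
    using assms unfolding has_vector_derivative_def by (auto intro!: derivative_eq_intros)
  have "((\<lambda>u. (g u - r) \<bullet> (g u - r)) has_derivative
      (\<lambda>h. (g s - r) \<bullet> (h *\<^sub>R g') + (h *\<^sub>R g') \<bullet> (g s - r))) (at s)"
    by (rule has_derivative_inner[OF d d])
  then show ?thesis
    unfolding has_field_derivative_def power2_norm_eq_inner
    by (rule has_derivative_eq_rhs) (auto simp: inner_complex_def algebra_simps)
qed

lemma local_min_norm_diff_imp_orthogonal:
  fixes g :: "real \<Rightarrow> complex"
  assumes "(g has_vector_derivative g') (at s)"
    and "d > 0" and "\<And>u. \<bar>s - u\<bar> < d \<Longrightarrow> norm (g s - r) \<le> norm (g u - r)"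
  shows "Re (cnj (g s - r) * g') = 0"
proof -
  have "(norm (g s - r))\<^sup>2 \<le> (norm (g u - r))\<^sup>2" if "\<bar>s - u\<bar> < d" for u
    using assms(3)[OF that] by (simp add: power_mono)
  then show ?thesis
    using DERIV_local_min[OF has_real_derivative_norm_diff_squared[OF assms(1)] assms(2)] by simp
qed

lemma curve_locally_in_set:
  fixes g :: "real \<Rightarrow> 'a::metric_space"
  assumes "continuous (at s) g" "lo < s" "s < hi" "g ` {lo..hi} \<subseteq> A"
    and "e > 0" "S \<inter> ball (g s) e = A \<inter> ball (g s) e"
  shows "\<exists>d>0. \<forall>u. \<bar>s - u\<bar> < d \<longrightarrow> g u \<in> S"
proof -
  obtain d1 where d1: "d1 > 0" "\<And>u. dist u s < d1 \<Longrightarrow> dist (g u) (g s) < e"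
    using assms(1,5) unfolding continuous_at_eps_delta by blast
  have "g u \<in> S" if "\<bar>s - u\<bar> < min (min (s - lo) (hi - s)) d1" for u
  proof -
    have "u \<in> {lo..hi}" using that by auto
    then have "g u \<in> A" using assms(4) by blast
    moreover have "g u \<in> ball (g s) e"
      using that d1(2)[of u] by (simp add: dist_real_def dist_commute abs_minus_commute)
    ultimately show ?thesis using assms(6) by blast
  qed
  then show ?thesis using assms(2,3) d1(1) by (intro exI[of _ "min (min (s - lo) (hi - s)) d1"]) auto
qed

lemma closest_point_on_curve_orthogonal:
  fixes g :: "real \<Rightarrow> complex"
  assumes "(g has_vector_derivative g') (at s)" "lo < s" "s < hi" "g ` {lo..hi} \<subseteq> A"
    and "e > 0" "S \<inter> ball (g s) e = A \<inter> ball (g s) e"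
    and "\<forall>x\<in>S. norm (g s - r) \<le> norm (x - r)"
  shows "Re (cnj (g s - r) * g') = 0"
proof -
  have "continuous (at s) g"
    using assms(1) by (rule has_vector_derivative_continuous)
  then obtain d where "d > 0" "\<And>u. \<bar>s - u\<bar> < d \<Longrightarrow> g u \<in> S"
    using curve_locally_in_set[OF _ assms(2-6)] by blast
  with assms(1,7) show ?thesis by (intro local_min_norm_diff_imp_orthogonal) auto
qed

lemma orthogonal_imp_real_multiple:
  assumes "w \<noteq> 0" "d \<noteq> 0" "Re (cnj w * d) = 0"
  shows "\<exists>k::real. \<i> * w = of_real k * d"
proof -
  define \<mu> where "\<mu> = Im (cnj w * d)"
  have wd: "cnj w * d = \<i> * of_real \<mu>"
    using assms(3) by (simp add: complex_eq_iff \<mu>_def)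
  then have "\<mu> \<noteq> 0" using assms(1,2) by auto
  have "w * cnj w = of_real ((norm w)\<^sup>2)"
    by (metis complex_norm_square of_real_power)
  then have "of_real ((norm w)\<^sup>2) * d = \<i> * of_real \<mu> * w"
    by (metis wd mult.assoc mult.commute)
  then have "\<i> * w = of_real ((norm w)\<^sup>2 / \<mu>) * d"
    using \<open>\<mu> \<noteq> 0\<close> by (simp add: field_simps)
  then show ?thesis by blast
qed

lemma arc_tangent_at_perpendicular_to_closest:
  assumes "arc_tangent_at S p t" "p \<noteq> r" "\<forall>x\<in>S. norm (p - r) \<le> norm (x - r)"
  shows "arc_tangent_at S p (- \<i> * (p - r))"
proof -
  obtain e where "e > 0" and
    "(\<exists>a b. a \<noteq> b \<and> p \<in> open_segment a b \<and>
        S \<inter> ball p e = closed_segment a b \<inter> ball p e) \<or>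
     (\<exists>c \<rho> th phi s. 0 < \<rho> \<and> 0 < phi \<and> phi \<le> 2 * pi \<and> 0 < s \<and> s < phi \<and>
        p = c + of_real \<rho> * cis (th + s) \<and> S \<inter> ball p e = round_arc c \<rho> th phi \<inter> ball p e)"
    using assms(1) unfolding arc_tangent_at_def by blast
  then consider (segment) a b where "a \<noteq> b" "p \<in> open_segment a b"
      "S \<inter> ball p e = closed_segment a b \<inter> ball p e"
    | (round) c \<rho> th phi s where "0 < \<rho>" "0 < phi" "phi \<le> 2 * pi" "0 < s" "s < phi"
      "p = c + of_real \<rho> * cis (th + s)" "S \<inter> ball p e = round_arc c \<rho> th phi \<inter> ball p e"
    by blast
  then show ?thesis
  proof cases
    case segment
    define g where "g s = a + of_real s * (b - a)" for s
    obtain u where "0 < u" "u < 1" "p = (1 - u) *\<^sub>R a + u *\<^sub>R b"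
      using segment(2) by (auto simp: in_segment)
    then have u: "0 < u" "u < 1" "g u = p"
      by (simp_all add: g_def scaleR_conv_of_real algebra_simps)
    have "Re (cnj (g u - r) * (b - a)) = 0"
    proof (rule closest_point_on_curve_orthogonal[where S = S and e = e])
      show "(g has_vector_derivative b - a) (at u)"
        unfolding g_def has_vector_derivative_def
        by (auto intro!: derivative_eq_intros simp: scaleR_conv_of_real)
      show "g ` {0..1} \<subseteq> closed_segment a b"
        by (auto simp: g_def in_segment scaleR_conv_of_real algebra_simps)
    qed (use u segment(3) \<open>e > 0\<close> assms(3) in \<open>simp_all only: u(3)\<close>)
    then have "Re (cnj (p - r) * (b - a)) = 0" by (simp only: u(3))
    then obtain k :: real where "\<i> * (p - r) = of_real k * (b - a)"
      using orthogonal_imp_real_multiple[of "p - r" "b - a"] assms(2) segment(1) by auto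
    then have "\<exists>k::real. - \<i> * (p - r) = of_real k * (b - a)"
      by (intro exI[of _ "- k"]) simp
    then show ?thesis unfolding arc_tangent_at_def using \<open>e > 0\<close> segment by blast
  next
    case round
    define g where "g s = c + of_real \<rho> * cis (th + s)" for s
    have gs: "g s = p" by (simp add: g_def round(6))
    have "Re (cnj (g s - r) * (\<i> * (p - c))) = 0"
    proof (rule closest_point_on_curve_orthogonal[where S = S and e = e])
      show "(g has_vector_derivative \<i> * (p - c)) (at s)"
        unfolding g_def round(6) has_vector_derivative_def
        by (auto intro!: derivative_eq_intros simp: scaleR_conv_of_real algebra_simps)
      show "g ` {0..phi} \<subseteq> round_arc c \<rho> th phi"
        by (auto simp: g_def round_arc_def)
    qed (use round(4,5,7) \<open>e > 0\<close> assms(3) in \<open>simp_all only: gs\<close>)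
    then have "Re (cnj (p - r) * (\<i> * (p - c))) = 0" by (simp only: gs)
    moreover have "\<i> * (p - c) \<noteq> 0" using round(1,6) by simp
    ultimately obtain k :: real where "\<i> * (p - r) = of_real k * (\<i> * (p - c))"
      using orthogonal_imp_real_multiple[of "p - r" "\<i> * (p - c)"] assms(2) by auto
    then have "\<exists>k::real. - \<i> * (p - r) = of_real k * \<i> * (p - c)"
      by (intro exI[of _ "- k"]) simp
    then show ?thesis unfolding arc_tangent_at_def using \<open>e > 0\<close> round by blast
  qed
qed

lemma ang_eqI:
  assumes "u \<noteq> 0" "0 \<le> a" "a < 2 * pi" "sgn v = cis (- a) * sgn u"
  shows "ang u v = a"
  unfolding ang_def
proof (rule the_equality)
  show "0 \<le> a \<and> a < 2 * pi \<and> sgn v = cis (- a) * sgn u" using assms(2-4) by blast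
next
  fix b assume b: "0 \<le> b \<and> b < 2 * pi \<and> sgn v = cis (- b) * sgn u"
  have "cis (- b) = cis (- a)" using b assms(1,4) by (simp add: sgn_eq_0_iff)
  then have "sin (- b) = sin (- a) \<and> cos (- b) = cos (- a)" by (simp add: complex_eq_iff)
  then obtain n :: int where n: "- b = - a + 2 * pi * n" using sin_cos_eq_iff by blast
  have "\<bar>2 * pi * n\<bar> < 2 * pi * 1" using n b assms(2,3) by linarith
  then have "n = 0" by (simp add: abs_mult)
  then show "b = a" using n by simp
qed

lemma ang_mult_rotate_clockwise:
  assumes "w \<noteq> 0" "Re q > 0"
  shows "ang (q * w) (- \<i> * w) = pi / 2 + Arg q"
proof -
  have Arg_q: "Arg q = arctan (Im q / Re q)" using assms(2) by (rule arg_conv_arctan)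
  have "- (pi / 2) < Arg q" "Arg q < pi / 2" unfolding Arg_q using arctan_bounded by auto
  moreover have "sgn (- \<i> * w) = cis (- (pi / 2 + Arg q)) * sgn (q * w)"
  proof -
    have "q \<noteq> 0" using assms(2) by auto
    then have "cis (- (pi / 2 + Arg q)) * sgn (q * w) = cis (- (pi / 2 + Arg q)) * cis (Arg q) * sgn w"
      by (simp add: sgn_mult cis_Arg mult.assoc)
    also have "\<dots> = - \<i> * sgn w" by (simp add: cis_mult complex_eq_iff)
    also have "\<dots> = sgn (- \<i> * w)" by (simp add: sgn_mult sgn_div_norm norm_mult)
    finally show ?thesis ..
  qed
  ultimately show ?thesis using assms by (intro ang_eqI) auto
qed

lemma abs_Arg_one_plus_le:
  assumes "norm v \<le> e" "e < 1"
  shows "\<bar>Arg (1 + v)\<bar> \<le> e / (1 - e)"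
proof -
  have Re: "1 - e \<le> Re (1 + v)" using abs_Re_le_cmod[of v] assms(1) by simp
  have Im: "\<bar>Im (1 + v)\<bar> \<le> e" using abs_Im_le_cmod[of v] assms(1) by simp
  have "Re (1 + v) > 0" using Re assms(2) by linarith
  then have "\<bar>Arg (1 + v)\<bar> = \<bar>arctan (Im (1 + v) / Re (1 + v))\<bar>" by (simp add: arg_conv_arctan)
  also have "\<dots> \<le> \<bar>Im (1 + v) / Re (1 + v)\<bar>" by (rule abs_arctan_le)
  also have "\<dots> = \<bar>Im (1 + v)\<bar> / Re (1 + v)"
    using \<open>Re (1 + v) > 0\<close> by simp
  also have "\<dots> \<le> e / (1 - e)"
    using Re Im assms(2) \<open>Re (1 + v) > 0\<close> by (intro frac_le) auto
  finally show ?thesis .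
qed

lemma axis_square_subset_cball: "axis_square z e \<subseteq> cball z e"
proof
  fix x assume "x \<in> axis_square z e"
  then have "\<bar>Re (x - z)\<bar> \<le> e / 2" "\<bar>Im (x - z)\<bar> \<le> e / 2" by (auto simp: axis_square_def)
  then show "x \<in> cball z e" using cmod_le[of "x - z"] by (simp add: dist_norm norm_minus_commute)
qed

lemma ball_subset_minkowski_sum_cball:
  assumes "r \<in> R"
  shows "ball r \<rho> \<subseteq> minkowski_sum R (cball 0 \<rho>)"
proof
  fix x assume "x \<in> ball r \<rho>"
  then have "x - r \<in> cball 0 \<rho>" by (simp add: dist_norm norm_minus_commute)
  then show "x \<in> minkowski_sum R (cball 0 \<rho>)"
    unfolding minkowski_sum_def using assms by force
qed

lemma frontier_minkowski_sum_cball_far: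
  assumes "r \<in> R" "x \<in> frontier (minkowski_sum R (cball 0 \<rho>))"
  shows "\<rho> \<le> norm (x - r)"
proof -
  have "ball r \<rho> \<subseteq> interior (minkowski_sum R (cball 0 \<rho>))"
    using ball_subset_minkowski_sum_cball[OF assms(1)] by (simp add: interior_maximal)
  then have "x \<notin> ball r \<rho>" using assms(2) by (auto simp: frontier_def)
  then show ?thesis by (simp add: dist_norm norm_minus_commute)
qed

lemma frontier_minkowski_sum_cball_closest:
  assumes "compact R" "p \<in> frontier (minkowski_sum R (cball 0 \<rho>))"
  obtains r where "r \<in> R" "norm (p - r) = \<rho>"
    "\<forall>x \<in> frontier (minkowski_sum R (cball 0 \<rho>)). norm (p - r) \<le> norm (x - r)"
proof -
  have "compact (minkowski_sum R (cball 0 \<rho>))"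
    unfolding minkowski_sum_def using assms(1) by (intro compact_sums) auto
  then have "p \<in> minkowski_sum R (cball 0 \<rho>)"
    using assms(2) compact_imp_closed frontier_subset_closed by blast
  then obtain r where "r \<in> R" "norm (p - r) \<le> \<rho>"
    unfolding minkowski_sum_def by auto
  with assms(2) frontier_minkowski_sum_cball_far that show ?thesis by force
qed

lemma clockwise_normal_angle:
  assumes "norm w = 1" "norm v \<le> e" "e < 1"
  shows "Im (cnj (v + w) * (- \<i> * w)) < 0"
    and "\<bar>ang (v + w) (- \<i> * w) - pi / 2\<bar> \<le> e / (1 - e)"
proof -
  define q where "q = 1 + v / w"
  have "w \<noteq> 0" "cnj w * w = 1"
    using assms(1) by (auto simp: complex_norm_square[symmetric] mult.commute)
  have vw: "v + w = q * w" using \<open>w \<noteq> 0\<close> by (simp add: q_def field_simps)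
  have small: "norm (v / w) \<le> e" using assms(1,2) by (simp add: norm_divide)
  then have "Re q > 0" using abs_Re_le_cmod[of "v / w"] assms(3) by (simp add: q_def)
  have "cnj (v + w) * (- \<i> * w) = - \<i> * cnj q * (cnj w * w)" unfolding vw by (simp add: mult_ac)
  also have "\<dots> = - \<i> * cnj q" using \<open>cnj w * w = 1\<close> by (simp only: mult_1_right)
  finally have "Im (cnj (v + w) * (- \<i> * w)) = Im (- \<i> * cnj q)" by (rule arg_cong)
  then show "Im (cnj (v + w) * (- \<i> * w)) < 0" using \<open>Re q > 0\<close> by simp
  have "ang (v + w) (- \<i> * w) = pi / 2 + Arg q"
    unfolding vw using \<open>w \<noteq> 0\<close> \<open>Re q > 0\<close> by (rule ang_mult_rotate_clockwise)
  moreover have "\<bar>Arg q\<bar> \<le> e / (1 - e)"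
    unfolding q_def using small assms(3) by (rule abs_Arg_one_plus_le)
  ultimately show "\<bar>ang (v + w) (- \<i> * w) - pi / 2\<bar> \<le> e / (1 - e)" by simp
qed

theorem mainTheorem9:
  fixes eps :: real and z :: complex and R :: "complex set" and p :: complex
  assumes "0 < eps" and "eps \<le> 1/10"
    and "R \<noteq> {}" and "circular_domain R" and "R \<subseteq> axis_square z eps"
    and "non_vertex (frontier (minkowski_sum R (cball 0 1))) p"
  shows "\<exists>t. clockwise_tangent (frontier (minkowski_sum R (cball 0 1))) z p t \<and>
             \<bar>ang (p - z) t - pi / 2\<bar> \<le> 4 * eps"
proof -
  define S where "S = frontier (minkowski_sum R (cball 0 1))"
  have R_near_z: "R \<subseteq> cball z eps" using assms(5) axis_square_subset_cball by blast
  moreover have "closed R" using assms(4) by (simp add: circular_domain_def)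
  ultimately have "compact R" by (meson bounded_cball bounded_subset compact_eq_bounded_closed)
  obtain t0 where "p \<in> S" "arc_tangent_at S p t0"
    using assms(6) by (auto simp: non_vertex_def S_def)
  then obtain r where r: "r \<in> R" "norm (p - r) = 1" "\<forall>x\<in>S. norm (p - r) \<le> norm (x - r)"
    using frontier_minkowski_sum_cball_closest[OF \<open>compact R\<close>] unfolding S_def by blast
  have tangent: "arc_tangent_at S p (- \<i> * (p - r))"
    using \<open>arc_tangent_at S p t0\<close> r by (intro arc_tangent_at_perpendicular_to_closest) auto
  have "norm (r - z) \<le> eps" using R_near_z r(1) by (auto simp: dist_norm norm_minus_commute)
  then have "Im (cnj (p - z) * (- \<i> * (p - r))) < 0"
    and "\<bar>ang (p - z) (- \<i> * (p - r)) - pi / 2\<bar> \<le> eps / (1 - eps)"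
    using clockwise_normal_angle[OF r(2), of "r - z" eps] assms(2) by simp_all
  moreover have "eps / (1 - eps) \<le> 4 * eps"
  proof -
    have "eps * 1 \<le> eps * (4 * (1 - eps))" using assms(1,2) by (intro mult_left_mono) auto
    then show ?thesis using assms(2) by (simp add: pos_divide_le_eq mult_ac)
  qed
  moreover have "norm (- \<i> * (p - r)) = 1" using r(2) by (simp add: norm_mult)
  ultimately show ?thesis
    using tangent unfolding S_def clockwise_tangent_def by (intro exI[of _ "- \<i> * (p - r)"]) auto
qed

end
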